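(* Let $n\ge2$. For every $l\in\mathbb{Z}$, $$X^{(n)}_l=\frac{1}{d_n}\sum_{\kappa\in I'_n}p_n\!\left(\mathbf{e}\!\left[\omega^{(n)}_{\kappa,1}\right]\right)\mathbf{e}\!\left[\omega^{(n)}_{\kappa,1}\cdot l\right]+\frac{1}{a_n}X^{(n-2)}_l.$$
   Context: Fix integers $a_1,a_2,\ldots\ge2$, $d_0=1$, $d_i=a_1\cdots a_i$, $\mathbf{e}[\alpha]=\exp(2\pi\sqrt{-1}\alpha)$. $I'_n=\{\kappa\in\{1,\dots,d_n\}\mid a_n\nmid\kappa\}$; $\omega^{(n)}_{\kappa,1}=\frac{\kappa}{d_n}-\lfloor\frac{\kappa}{d_n}\rfloor$. $p_n(t)=\prod_{i=1}^n(1-t^{d_{i-1}})^{(-1)^{n-i}}$ for $n\ge1$ (a polynomial), $p_0(t)=1$. For $n\ge1$ and $l\in\mathbb{Z}$, $X^{(n)}_l:=\frac{1}{d_n}\sum_{a=1}^{d_n}p_n(\mathbf{e}[\frac{a}{d_n}])\mathbf{e}[\frac{a}{d_n}l]$, and $X^{(0)}_l:=1$. *)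

theory Defs
  imports Complex_Main "HOL-Computational_Algebra.Polynomial"
begin

text \<open>The sequence a_1, a_2, ... is a function a :: nat => nat (a 0 unused).\<close>

definition dd :: "(nat \<Rightarrow> nat) \<Rightarrow> nat \<Rightarrow> nat" where
  "dd a i = (\<Prod>j\<in>{1..i}. a j)"

definition ee :: "real \<Rightarrow> complex" where
  "ee \<alpha> = exp (2 * of_real pi * \<i> * of_real \<alpha>)"

definition Iprime :: "(nat \<Rightarrow> nat) \<Rightarrow> nat \<Rightarrow> nat set" where
  "Iprime a n = {\<kappa> \<in> {1..dd a n}. \<not> a n dvd \<kappa>}"

definition omega1 :: "(nat \<Rightarrow> nat) \<Rightarrow> nat \<Rightarrow> nat \<Rightarrow> real" where
  "omega1 a n \<kappa> = real \<kappa> / real (dd a n) - of_int \<lfloor>real \<kappa> / real (dd a n)\<rfloor>"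

text \<open>p_n(t) = prod_{i=1}^n (1 - t^{d_{i-1}})^{(-1)^{n-i}}, which is a polynomial;
  realised as the exact quotient of the product of factors with exponent +1
  by the product of factors with exponent -1.\<close>
definition pfac :: "(nat \<Rightarrow> nat) \<Rightarrow> nat \<Rightarrow> complex poly" where
  "pfac a i = 1 - monom 1 (dd a (i - 1))"

definition ppoly :: "(nat \<Rightarrow> nat) \<Rightarrow> nat \<Rightarrow> complex poly" where
  "ppoly a n = (if n = 0 then 1 else
     (\<Prod>i\<in>{i\<in>{1..n}. even (n - i)}. pfac a i) div
     (\<Prod>i\<in>{i\<in>{1..n}. odd (n - i)}. pfac a i))"

definition X :: "(nat \<Rightarrow> nat) \<Rightarrow> nat \<Rightarrow> int \<Rightarrow> complex" where
  "X a n l = (if n = 0 then 1 else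
     (1 / of_nat (dd a n)) *
     (\<Sum>b = 1..dd a n. poly (ppoly a n) (ee (real b / real (dd a n)))
                        * ee (real b / real (dd a n) * of_int l)))"

end

theory Submission
  imports Defs "HOL-Analysis.Complex_Transcendental"
begin

text \<open>Since 1 - t^(d_(j+1)) = (1 - t^(d_j)) G_j(t) with G_j(t) = \<Sum>_(s < a_(j+1)) t^(s d_j),
  one has p_(j+2) = G_j p_j. Split the sum defining X^(n)_l, n = j + 2, according to whether a_n
  divides the index. The other indices give the first term, since \<omega>^(n)_(\<kappa>,1) differs from
  \<kappa>/d_n by an integer. For the index a_n c the point \<zeta> = e[c/d_(j+1)] is a d_(j+1)-th root of
  unity, so G_j(\<zeta>) is a_(j+1) if \<zeta>^(d_j) = 1, i.e. if a_(j+1) divides c, and 0 otherwise.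
  What survives is a_(j+1) times the sum defining d_j X^(j)_l.\<close>

lemma ee_add: "ee (x + y) = ee x * ee y"
  unfolding ee_def by (simp add: distrib_left exp_add)

lemma ee_of_int [simp]: "ee (of_int z) = 1"
  unfolding ee_def using exp_2pi_1_int[of z] by (simp add: mult_ac)

lemma ee_diff_of_int [simp]: "ee (x - of_int z) = ee x"
  using ee_add[of x "of_int (- z)"] ee_of_int[of "- z"] by simp

lemma ee_of_nat [simp]: "ee (of_nat n) = 1"
  using ee_of_int[of "int n"] by simp

lemma ee_power: "ee x ^ n = ee (real n * x)"
  unfolding ee_def by (simp add: exp_of_nat_mult[symmetric] mult_ac)

lemma ee_of_nat_div_eq_1_iff:
  assumes "0 < m"
  shows "ee (real j / real m) = 1 \<longleftrightarrow> m dvd j"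
  using complex_root_unity_eq_1[of m j] assms unfolding ee_def by (simp add: mult_ac)

lemma dd_0 [simp]: "dd a 0 = 1"
  by (simp add: dd_def)

lemma dd_Suc: "dd a (Suc i) = a (Suc i) * dd a i"
  by (simp add: dd_def)

lemma dd_pos:
  assumes "\<forall>i\<ge>1. 0 < a i"
  shows "0 < dd a m"
  unfolding dd_def using assms by (auto intro!: prod_pos)

lemma one_minus_monom_mult:
  "1 - monom (1 :: 'a :: comm_ring_1) (d * r) = (1 - monom 1 d) * (\<Sum>t<r. monom 1 (d * t))"
  unfolding monom_altdef using one_diff_power_eq[of "[:0, 1:] ^ d" r]
  by (simp add: power_mult)

lemma poly_lacunary_geometric_sum:
  fixes \<zeta> :: "'a :: field"
  assumes "\<zeta> ^ (d * r) = 1"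
  shows "poly (\<Sum>t<r. monom 1 (d * t)) \<zeta> = (if \<zeta> ^ d = 1 then of_nat r else 0)"
proof -
  have "poly (\<Sum>t<r. monom 1 (d * t)) \<zeta> = (\<Sum>t<r. (\<zeta> ^ d) ^ t)"
    by (simp add: poly_sum poly_monom power_mult)
  then show ?thesis
    using assms by (simp add: geometric_sum power_mult)
qed

definition pnum :: "(nat \<Rightarrow> nat) \<Rightarrow> nat \<Rightarrow> complex poly" where
  "pnum a n = (\<Prod>i\<in>{i\<in>{1..n}. even (n - i)}. pfac a i)"

definition pden :: "(nat \<Rightarrow> nat) \<Rightarrow> nat \<Rightarrow> complex poly" where
  "pden a n = (\<Prod>i\<in>{i\<in>{1..n}. odd (n - i)}. pfac a i)"

lemma ppoly_eq_div: "ppoly a n = pnum a n div pden a n"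
  by (cases "n = 0") (simp_all add: ppoly_def pnum_def pden_def)

lemma pnum_Suc_Suc: "pnum a (Suc (Suc j)) = pfac a (Suc (Suc j)) * pnum a j"
proof -
  have "{i\<in>{1..Suc (Suc j)}. even (Suc (Suc j) - i)} = insert (Suc (Suc j)) {i\<in>{1..j}. even (j - i)}"
    by (auto simp: le_Suc_eq)
  then show ?thesis
    unfolding pnum_def by simp
qed

lemma pden_Suc_Suc: "pden a (Suc (Suc j)) = pfac a (Suc j) * pden a j"
proof -
  have "{i\<in>{1..Suc (Suc j)}. odd (Suc (Suc j) - i)} = insert (Suc j) {i\<in>{1..j}. odd (j - i)}"
    by (auto simp: le_Suc_eq)
  then show ?thesis
    unfolding pden_def by simp
qed

lemma pfac_Suc_Suc:
  "pfac a (Suc (Suc j)) = pfac a (Suc j) * (\<Sum>t<a (Suc j). monom 1 (dd a j * t))"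
  unfolding pfac_def using one_minus_monom_mult[of "dd a j" "a (Suc j)"]
  by (simp add: dd_Suc mult.commute)

lemma pden_dvd_pnum: "pden a n dvd pnum a n"
proof (induction n rule: nat_induct2)
  case 0
  show ?case
    by (simp add: pden_def)
next
  case 1
  have "pden a 1 = 1"
    unfolding pden_def by (rule prod.neutral) auto
  then show ?case
    by simp
next
  case (step n)
  then show ?case
    by (simp add: pnum_Suc_Suc pden_Suc_Suc pfac_Suc_Suc mult.assoc mult_dvd_mono)
qed

lemma pfac_nonzero:
  assumes "\<forall>i\<ge>1. 0 < a i"
  shows "pfac a i \<noteq> 0"
proof
  assume "pfac a i = 0"
  then have "coeff (pfac a i) 0 = 0"
    by simp
  then show False
    using dd_pos[OF assms, of "i - 1"] by (simp add: pfac_def coeff_monom)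
qed

lemma ppoly_Suc_Suc:
  assumes "\<forall>i\<ge>1. 0 < a i"
  shows "ppoly a (Suc (Suc j)) = (\<Sum>t<a (Suc j). monom 1 (dd a j * t)) * ppoly a j"
  unfolding ppoly_eq_div pnum_Suc_Suc pden_Suc_Suc pfac_Suc_Suc
  using pfac_nonzero[OF assms, of "Suc j"] pden_dvd_pnum[of a j]
  by (simp add: mult.assoc div_mult_mult1 div_mult_swap)

definition X_summand :: "(nat \<Rightarrow> nat) \<Rightarrow> nat \<Rightarrow> int \<Rightarrow> nat \<Rightarrow> complex" where
  "X_summand a n l b =
     poly (ppoly a n) (ee (real b / real (dd a n))) * ee (real b / real (dd a n) * of_int l)"

lemma X_eq_sum_X_summand: "X a n l = 1 / of_nat (dd a n) * (\<Sum>b=1..dd a n. X_summand a n l b)"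
  by (cases "n = 0") (simp_all add: X_def X_summand_def ppoly_def)

lemma X_summand_eq_omega1:
  "X_summand a n l \<kappa> = poly (ppoly a n) (ee (omega1 a n \<kappa>)) * ee (omega1 a n \<kappa> * of_int l)"
proof -
  define z where "z = \<lfloor>real \<kappa> / real (dd a n)\<rfloor>"
  have "omega1 a n \<kappa> = real \<kappa> / real (dd a n) - of_int z"
    and "omega1 a n \<kappa> * of_int l = real \<kappa> / real (dd a n) * of_int l - of_int (z * l)"
    by (simp_all add: omega1_def z_def algebra_simps)
  then show ?thesis
    by (simp only: X_summand_def ee_diff_of_int)
qed

lemma sum_over_multiples:
  assumes "0 < (k :: nat)"
  shows "(\<Sum>b\<in>{b\<in>{1..k * m}. k dvd b}. f b) = (\<Sum>c=1..m. f (k * c))"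
proof -
  have "{b\<in>{1..k * m}. k dvd b} = (\<lambda>c. k * c) ` {1..m}"
    using assms by (auto elim!: dvdE)
  moreover have "inj_on (\<lambda>c. k * c) {1..m}"
    using assms by (auto simp: inj_on_def)
  ultimately show ?thesis
    by (simp add: sum.reindex)
qed

lemma X_summand_Suc_Suc_mult:
  assumes pos: "\<forall>i\<ge>1. 0 < a i"
  shows "X_summand a (Suc (Suc j)) l (a (Suc (Suc j)) * c) =
    (if a (Suc j) dvd c then of_nat (a (Suc j)) * X_summand a j l (c div a (Suc j)) else 0)"
proof -
  define \<zeta> where "\<zeta> = ee (real c / real (dd a (Suc j)))"
  have pos_a: "0 < a (Suc j)" "0 < a (Suc (Suc j))" and pos_dd: "0 < dd a j"
    using pos dd_pos[OF pos] by auto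
  have "X_summand a (Suc (Suc j)) l (a (Suc (Suc j)) * c) =
      poly (\<Sum>t<a (Suc j). monom 1 (dd a j * t)) \<zeta> *
      (poly (ppoly a j) \<zeta> * ee (real c / real (dd a (Suc j)) * of_int l))"
    using pos_a by (simp add: X_summand_def ppoly_Suc_Suc[OF pos] \<zeta>_def dd_Suc)
  moreover have "\<zeta> ^ (dd a j * a (Suc j)) = 1"
    using pos_a pos_dd by (simp add: \<zeta>_def ee_power dd_Suc)
  moreover have "\<zeta> ^ dd a j = 1 \<longleftrightarrow> a (Suc j) dvd c"
    using pos_a pos_dd by (simp add: \<zeta>_def ee_power dd_Suc ee_of_nat_div_eq_1_iff)
  ultimately show ?thesis
    using pos_a by (auto simp: poly_lacunary_geometric_sum X_summand_def \<zeta>_def dd_Suc elim!: dvdE)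
qed

lemma sum_X_summand_multiples:
  assumes pos: "\<forall>i\<ge>1. 0 < a i"
  shows "(\<Sum>b\<in>{b\<in>{1..dd a (Suc (Suc j))}. a (Suc (Suc j)) dvd b}. X_summand a (Suc (Suc j)) l b) =
    of_nat (a (Suc j)) * (\<Sum>c=1..dd a j. X_summand a j l c)"
proof -
  let ?k = "a (Suc j)"
  have pos_a: "0 < ?k" "0 < a (Suc (Suc j))"
    using pos by auto
  have "(\<Sum>b\<in>{b\<in>{1..dd a (Suc (Suc j))}. a (Suc (Suc j)) dvd b}. X_summand a (Suc (Suc j)) l b) =
      (\<Sum>c=1..dd a (Suc j). X_summand a (Suc (Suc j)) l (a (Suc (Suc j)) * c))"
    unfolding dd_Suc[of a "Suc j"] by (rule sum_over_multiples[OF pos_a(2)])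
  also have "\<dots> = (\<Sum>c=1..?k * dd a j. if ?k dvd c then of_nat ?k * X_summand a j l (c div ?k) else 0)"
    by (simp add: dd_Suc X_summand_Suc_Suc_mult[OF pos])
  also have "\<dots> = (\<Sum>c\<in>{c\<in>{1..?k * dd a j}. ?k dvd c}. of_nat ?k * X_summand a j l (c div ?k))"
    by (rule sum.inter_filter[symmetric]) simp
  also have "\<dots> = (\<Sum>c=1..dd a j. of_nat ?k * X_summand a j l (?k * c div ?k))"
    by (rule sum_over_multiples[OF pos_a(1)])
  also have "\<dots> = of_nat ?k * (\<Sum>c=1..dd a j. X_summand a j l c)"
    using pos_a by (simp add: sum_distrib_left)
  finally show ?thesis .
qed

theorem lemma4p5:
  fixes a :: "nat \<Rightarrow> nat" and n :: nat and l :: int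
  assumes "\<forall>i\<ge>1. a i \<ge> 2"
    and "n \<ge> 2"
  shows "X a n l =
    (1 / of_nat (dd a n)) *
      (\<Sum>\<kappa>\<in>Iprime a n. poly (ppoly a n) (ee (omega1 a n \<kappa>)) * ee (omega1 a n \<kappa> * of_int l))
    + (1 / of_nat (a n)) * X a (n - 2) l"
proof -
  obtain j where n: "n = Suc (Suc j)"
    using assms(2) by (metis add_2_eq_Suc le_Suc_ex)
  have pos: "\<forall>i\<ge>1. 0 < a i"
    using assms(1) by (metis not_numeral_le_zero not_gr_zero)
  let ?multiples = "{b\<in>{1..dd a n}. a n dvd b}"
  have multiples_eq: "?multiples = {1..dd a n} \<inter> {b. a n dvd b}"
    and Iprime_eq: "Iprime a n = {1..dd a n} - {b. a n dvd b}"
    unfolding Iprime_def by auto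
  have "X a n l = 1 / of_nat (dd a n) * (\<Sum>b=1..dd a n. X_summand a n l b)"
    by (rule X_eq_sum_X_summand)
  also have "(\<Sum>b=1..dd a n. X_summand a n l b) =
      (\<Sum>\<kappa>\<in>Iprime a n. X_summand a n l \<kappa>) + (\<Sum>b\<in>?multiples. X_summand a n l b)"
    using sum.Int_Diff[of "{1..dd a n}" "X_summand a n l" "{b. a n dvd b}"] multiples_eq Iprime_eq
    by (simp add: add.commute)
  also have "(\<Sum>b\<in>?multiples. X_summand a n l b) = of_nat (a (Suc j)) * (\<Sum>c=1..dd a j. X_summand a j l c)"
    unfolding n by (rule sum_X_summand_multiples[OF pos])
  also have "\<dots> = of_nat (dd a n) / of_nat (a n) * X a j l"
    using dd_pos[OF pos, of j] pos by (simp add: X_eq_sum_X_summand n dd_Suc)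
  finally show ?thesis
    using dd_pos[OF pos, of n] by (simp add: X_summand_eq_omega1 n distrib_left)
qed

end
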